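(* Let $R$ be a principal ideal domain and let $Ra$ be a left ideal of $R$ that is not a two-sided ideal. Then $Ra$ is weakly prime if and only if $a$ has no non-unit invariant factor. Equivalently, $Ra$ is weakly prime if and only if $Ra$ is not contained in any proper two-sided ideal of $R$.
   Context: A principal ideal domain (PID) is a (not necessarily commutative) domain in which every left ideal and every right ideal is principal. A left ideal $\mathfrak{p}$ is weakly prime if $\mathfrak{p}\neq R$ and, for left ideals $A,B$, $AB\subseteq\mathfrak{p}$ and $\mathfrak{p}B\subseteq\mathfrak{p}$ imply $A\subseteq\mathfrak{p}$ or $B\subseteq\mathfrak{p}$. A nonzero $c$ is invariant if $Rc=cR$. $c$ is a factor of $a$ if $a=rcs$ for some $r,s\in R$. *)

theory Defs
  imports Main
begin

definition left_ideal :: "'a::ring_1 set \<Rightarrow> bool" where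
  "left_ideal I \<longleftrightarrow> 0 \<in> I \<and> (\<forall>x\<in>I. \<forall>y\<in>I. x - y \<in> I) \<and> (\<forall>r. \<forall>x\<in>I. r * x \<in> I)"

definition right_ideal :: "'a::ring_1 set \<Rightarrow> bool" where
  "right_ideal I \<longleftrightarrow> 0 \<in> I \<and> (\<forall>x\<in>I. \<forall>y\<in>I. x - y \<in> I) \<and> (\<forall>r. \<forall>x\<in>I. x * r \<in> I)"

definition two_sided_ideal :: "'a::ring_1 set \<Rightarrow> bool" where
  "two_sided_ideal I \<longleftrightarrow> left_ideal I \<and> right_ideal I"

definition lprinc :: "'a::ring_1 \<Rightarrow> 'a set" where
  "lprinc a = {r * a | r. True}"

definition rprinc :: "'a::ring_1 \<Rightarrow> 'a set" where
  "rprinc a = {a * r | r. True}"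

definition PID :: "'a::ring_1_no_zero_divisors itself \<Rightarrow> bool" where
  "PID _ \<longleftrightarrow> (\<forall>I::'a set. left_ideal I \<longrightarrow> (\<exists>b. I = lprinc b))
              \<and> (\<forall>I::'a set. right_ideal I \<longrightarrow> (\<exists>b. I = rprinc b))"

definition set_mult :: "'a::ring_1 set \<Rightarrow> 'a set \<Rightarrow> 'a set" where
  "set_mult A B = {x. \<exists>ps. set ps \<subseteq> A \<times> B \<and> x = (\<Sum>(a,b)\<leftarrow>ps. a * b)}"

definition weakly_prime :: "'a::ring_1 set \<Rightarrow> bool" where
  "weakly_prime P \<longleftrightarrow> P \<noteq> UNIV \<and>
     (\<forall>A B. left_ideal A \<longrightarrow> left_ideal B \<longrightarrow>
        set_mult A B \<subseteq> P \<longrightarrow> set_mult P B \<subseteq> P \<longrightarrow> A \<subseteq> P \<or> B \<subseteq> P)"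

definition invariant :: "'a::ring_1 \<Rightarrow> bool" where
  "invariant c \<longleftrightarrow> c \<noteq> 0 \<and> lprinc c = rprinc c"

definition is_factor :: "'a::ring_1 \<Rightarrow> 'a \<Rightarrow> bool" where
  "is_factor c a \<longleftrightarrow> (\<exists>r s. a = r * c * s)"

definition unit :: "'a::ring_1 \<Rightarrow> bool" where
  "unit u \<longleftrightarrow> (\<exists>v. u * v = 1 \<and> v * u = 1)"

end

theory Submission
  imports Defs
begin

text \<open>In a PID a nonzero two-sided ideal \<open>I = Rc = dR\<close> has an invariant generator: writing
  \<open>c = ds\<close>, \<open>d = tc\<close> and \<open>td = d\<tau>\<close> gives \<open>\<tau>s = 1\<close>, so \<open>s\<close> is a unit and \<open>cR = dR = Rc\<close>.
  Hence \<open>Ra\<close> lies in a proper two-sided ideal iff \<open>a\<close> has a non-unit invariant factor \<open>c\<close>.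
  In that case \<open>a = ca'\<close>, and the left ideals \<open>Rc\<close> and \<open>Ra'\<close> violate weak primality of \<open>Ra\<close>:
  both products land in \<open>Ra\<close> because \<open>cRa' \<subseteq> Rca' = Ra\<close>.
  Conversely, if \<open>AB \<subseteq> Ra\<close> and \<open>(Ra)B \<subseteq> Ra\<close>, the set of \<open>x\<close> with \<open>xRB \<subseteq> Ra\<close> is a two-sided
  ideal containing \<open>Ra\<close> and \<open>A\<close>; if it is not proper it contains \<open>1\<close>, i.e. \<open>B \<subseteq> Ra\<close>.\<close>

lemma lprinc_iff: "x \<in> lprinc a \<longleftrightarrow> (\<exists>r. x = r * a)"
  by (auto simp: lprinc_def)

lemma rprinc_iff: "x \<in> rprinc a \<longleftrightarrow> (\<exists>r. x = a * r)"
  by (auto simp: rprinc_def)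

lemma lprincI [intro]: "r * a \<in> lprinc a"
  by (auto simp: lprinc_iff)

lemma rprincI [intro]: "a * r \<in> rprinc a"
  by (auto simp: rprinc_iff)

lemma lprinc_self: "a \<in> lprinc a"
  using lprincI[of 1 a] by simp

lemma rprinc_self: "a \<in> rprinc a"
  using rprincI[of a 1] by simp

lemma left_ideal_lprinc: "left_ideal (lprinc a)"
  unfolding left_ideal_def
proof (intro conjI ballI allI)
  show "0 \<in> lprinc a" using lprincI[of 0 a] by simp
next
  fix x y assume "x \<in> lprinc a" "y \<in> lprinc a"
  then show "x - y \<in> lprinc a" by (metis lprinc_iff left_diff_distrib)
next
  fix r x assume "x \<in> lprinc a"
  then show "r * x \<in> lprinc a" by (metis lprinc_iff mult.assoc)
qed

lemma right_ideal_rprinc: "right_ideal (rprinc a)"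
  unfolding right_ideal_def
proof (intro conjI ballI allI)
  show "0 \<in> rprinc a" using rprincI[of a 0] by simp
next
  fix x y assume "x \<in> rprinc a" "y \<in> rprinc a"
  then show "x - y \<in> rprinc a" by (metis rprinc_iff right_diff_distrib)
next
  fix r x assume "x \<in> rprinc a"
  then show "x * r \<in> rprinc a" by (metis rprinc_iff mult.assoc)
qed

lemma left_ideal_add:
  assumes "left_ideal P" "x \<in> P" "y \<in> P"
  shows "x + y \<in> P"
proof -
  have "0 - y \<in> P" using assms unfolding left_ideal_def by blast
  then have "x - (0 - y) \<in> P" using assms unfolding left_ideal_def by blast
  then show ?thesis by simp
qed

lemma left_ideal_eq_UNIV_iff:
  assumes "left_ideal P"
  shows "P = UNIV \<longleftrightarrow> 1 \<in> P"
proof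
  assume "1 \<in> P"
  then have "x * 1 \<in> P" for x using assms unfolding left_ideal_def by blast
  then show "P = UNIV" by auto
qed simp

lemma lprinc_subset_iff: "lprinc a \<subseteq> lprinc c \<longleftrightarrow> a \<in> lprinc c"
proof
  assume "a \<in> lprinc c"
  then obtain r where "a = r * c" unfolding lprinc_iff by blast
  then show "lprinc a \<subseteq> lprinc c" by (auto simp: lprinc_iff) (metis mult.assoc)
qed (use lprinc_self in blast)

lemma rprinc_subset_iff: "rprinc a \<subseteq> rprinc c \<longleftrightarrow> a \<in> rprinc c"
proof
  assume "a \<in> rprinc c"
  then obtain r where "a = c * r" unfolding rprinc_iff by blast
  then show "rprinc a \<subseteq> rprinc c" by (auto simp: rprinc_iff) (metis mult.assoc)
qed (use rprinc_self in blast)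

lemma two_sided_ideal_UNIV: "two_sided_ideal UNIV"
  unfolding two_sided_ideal_def left_ideal_def right_ideal_def by simp

lemma two_sided_ideal_lprinc_0: "two_sided_ideal (lprinc 0)"
proof -
  have "lprinc 0 = rprinc 0" by (auto simp: lprinc_iff rprinc_iff)
  then show ?thesis
    using left_ideal_lprinc right_ideal_rprinc unfolding two_sided_ideal_def by metis
qed

lemma set_mult_subset_left_ideal_iff:
  assumes P: "left_ideal P"
  shows "set_mult A B \<subseteq> P \<longleftrightarrow> (\<forall>x\<in>A. \<forall>y\<in>B. x * y \<in> P)"
proof
  assume "set_mult A B \<subseteq> P"
  moreover have "x * y \<in> set_mult A B" if "x \<in> A" "y \<in> B" for x y
    unfolding set_mult_def using that by (intro CollectI exI[of _ "[(x, y)]"]) simp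
  ultimately show "\<forall>x\<in>A. \<forall>y\<in>B. x * y \<in> P" by blast
next
  assume prod: "\<forall>x\<in>A. \<forall>y\<in>B. x * y \<in> P"
  have "(\<Sum>(x, y)\<leftarrow>ps. x * y) \<in> P" if "set ps \<subseteq> A \<times> B" for ps
    using that
  proof (induction ps)
    case Nil
    then show ?case using P by (simp add: left_ideal_def)
  next
    case (Cons p ps)
    then show ?case using prod left_ideal_add[OF P] by (cases p) auto
  qed
  then show "set_mult A B \<subseteq> P" unfolding set_mult_def by blast
qed

lemma mult_eq_1_commute:
  fixes c :: "'a::ring_1_no_zero_divisors"
  assumes "w * c = 1"
  shows "c * w = 1"
proof -
  have "c \<noteq> 0" using assms by auto
  moreover have "(c * w) * c = 1 * c" using assms by (simp add: mult.assoc)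
  ultimately show ?thesis by (metis mult_cancel_right)
qed

lemma unit_iff_left_inverse:
  fixes c :: "'a::ring_1_no_zero_divisors"
  shows "unit c \<longleftrightarrow> (\<exists>v. v * c = 1)"
  unfolding unit_def using mult_eq_1_commute by blast

lemma lprinc_eq_UNIV_iff_unit:
  fixes c :: "'a::ring_1_no_zero_divisors"
  shows "lprinc c = UNIV \<longleftrightarrow> unit c"
  unfolding left_ideal_eq_UNIV_iff[OF left_ideal_lprinc] lprinc_iff unit_iff_left_inverse
  by metis

lemma invariant_mult_left:
  assumes "invariant c"
  obtains w where "c * z = w * c"
proof -
  have "c * z \<in> lprinc c" using assms rprincI[of c z] unfolding invariant_def by simp
  then show thesis using that unfolding lprinc_iff by blast
qed

lemma invariant_mult_right:
  assumes "invariant c"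
  obtains w where "z * c = c * w"
proof -
  have "z * c \<in> rprinc c" using assms lprincI[of z c] unfolding invariant_def by simp
  then show thesis using that unfolding rprinc_iff by blast
qed

lemma two_sided_ideal_lprinc_invariant:
  "invariant c \<Longrightarrow> two_sided_ideal (lprinc c)"
  unfolding invariant_def two_sided_ideal_def
  using left_ideal_lprinc right_ideal_rprinc by metis

lemma invariant_is_factor_iff:
  assumes "invariant c"
  shows "is_factor c a \<longleftrightarrow> a \<in> lprinc c"
proof
  assume "is_factor c a"
  then obtain r s where a: "a = r * c * s" unfolding is_factor_def by blast
  obtain w where "c * s = w * c" using invariant_mult_left[OF assms] .
  then have "a = (r * w) * c" using a by (simp add: mult.assoc)
  then show "a \<in> lprinc c" by blast
next
  assume "a \<in> lprinc c"
  then show "is_factor c a" unfolding lprinc_iff is_factor_def by (metis mult.right_neutral)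
qed

lemma PID_two_sided_ideal_invariant_generator:
  fixes I :: "'a::ring_1_no_zero_divisors set"
  assumes pid: "PID TYPE('a)" and I: "two_sided_ideal I" and nonzero: "I \<noteq> lprinc 0"
  obtains c where "invariant c" "I = lprinc c"
proof -
  have li: "left_ideal I" and ri: "right_ideal I"
    using I unfolding two_sided_ideal_def by auto
  obtain c where c: "I = lprinc c" using pid li unfolding PID_def by blast
  obtain d where d: "I = rprinc d" using pid ri unfolding PID_def by blast
  have "c \<noteq> 0" using c nonzero by blast
  have "c \<in> rprinc d" using lprinc_self[of c] c d by simp
  then obtain s where s: "c = d * s" unfolding rprinc_iff by blast
  have "d \<in> lprinc c" using rprinc_self[of d] c d by simp
  then obtain t where t: "d = t * c" unfolding lprinc_iff by blast
  have "t * d \<in> rprinc d" using li d rprinc_self unfolding left_ideal_def by blast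
  then obtain \<tau> where \<tau>: "t * d = d * \<tau>" unfolding rprinc_iff by blast
  have "d * 1 = t * (d * s)" using t s by simp
  also have "\<dots> = d * (\<tau> * s)" using \<tau> by (simp add: mult.assoc[symmetric])
  finally have "d * 1 = d * (\<tau> * s)" .
  moreover have "d \<noteq> 0" using \<open>c \<noteq> 0\<close> s by auto
  ultimately have "\<tau> * s = 1" by (metis mult_cancel_left)
  then have "s * \<tau> = 1" by (rule mult_eq_1_commute)
  then have "c * \<tau> = d" using s by (metis mult.assoc mult.right_neutral)
  then have "rprinc c = rprinc d"
    using s rprincI rprinc_subset_iff by (metis subset_antisym)
  then have "invariant c" using \<open>c \<noteq> 0\<close> c d unfolding invariant_def by simp
  then show ?thesis using c that by blast
qed

lemma PID_proper_two_sided_ideal_above_iff: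
  fixes a :: "'a::ring_1_no_zero_divisors"
  assumes pid: "PID TYPE('a)" and "a \<noteq> 0"
  shows "(\<exists>I. two_sided_ideal I \<and> I \<noteq> UNIV \<and> lprinc a \<subseteq> I) \<longleftrightarrow>
         (\<exists>c. invariant c \<and> \<not> unit c \<and> is_factor c a)"
proof
  assume "\<exists>I. two_sided_ideal I \<and> I \<noteq> UNIV \<and> lprinc a \<subseteq> I"
  then obtain I where I: "two_sided_ideal I" "I \<noteq> UNIV" "lprinc a \<subseteq> I" by blast
  have "I \<noteq> lprinc 0"
    using I(3) lprinc_self \<open>a \<noteq> 0\<close> by (auto simp: lprinc_iff)
  then obtain c where c: "invariant c" "I = lprinc c"
    using PID_two_sided_ideal_invariant_generator[OF pid I(1)] by blast
  then show "\<exists>c. invariant c \<and> \<not> unit c \<and> is_factor c a"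
    using I lprinc_eq_UNIV_iff_unit invariant_is_factor_iff lprinc_subset_iff by metis
next
  assume "\<exists>c. invariant c \<and> \<not> unit c \<and> is_factor c a"
  then show "\<exists>I. two_sided_ideal I \<and> I \<noteq> UNIV \<and> lprinc a \<subseteq> I"
    using two_sided_ideal_lprinc_invariant lprinc_eq_UNIV_iff_unit
      invariant_is_factor_iff lprinc_subset_iff by metis
qed

lemma not_weakly_prime_if_invariant_factor:
  fixes a c :: "'a::ring_1_no_zero_divisors"
  assumes inv: "invariant c" and nonunit: "\<not> unit c" and factor: "is_factor c a"
    and not_two_sided: "\<not> two_sided_ideal (lprinc a)"
  shows "\<not> weakly_prime (lprinc a)"
proof
  assume wp: "weakly_prime (lprinc a)"
  have "a \<in> rprinc c" using inv factor invariant_is_factor_iff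
    unfolding invariant_def by blast
  then obtain a' where a': "a = c * a'" unfolding rprinc_iff by blast
  have key: "r * (c * z * a') \<in> lprinc a" for r z
  proof -
    obtain w where "c * z = w * c" using invariant_mult_left[OF inv] .
    then have "r * (c * z * a') = (r * w) * a" using a' by (simp add: mult.assoc)
    then show ?thesis by (metis lprincI)
  qed
  have "set_mult (lprinc c) (lprinc a') \<subseteq> lprinc a"
    unfolding set_mult_subset_left_ideal_iff[OF left_ideal_lprinc]
  proof (intro ballI)
    fix x y assume "x \<in> lprinc c" "y \<in> lprinc a'"
    then obtain u v where uv: "x = u * c" "y = v * a'" unfolding lprinc_iff by blast
    obtain z where "u * c = c * z" using invariant_mult_right[OF inv] .
    then have "x * y = c * (z * v) * a'" using uv by (simp add: mult.assoc)
    then show "x * y \<in> lprinc a" using key[of 1] by simp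
  qed
  moreover have "set_mult (lprinc a) (lprinc a') \<subseteq> lprinc a"
    unfolding set_mult_subset_left_ideal_iff[OF left_ideal_lprinc]
  proof (intro ballI)
    fix x y assume "x \<in> lprinc a" "y \<in> lprinc a'"
    then obtain u v where uv: "x = u * a" "y = v * a'" unfolding lprinc_iff by blast
    then have "x * y = u * (c * (a' * v) * a')" using a' by (simp add: mult.assoc)
    then show "x * y \<in> lprinc a" using key by metis
  qed
  ultimately have "lprinc c \<subseteq> lprinc a \<or> lprinc a' \<subseteq> lprinc a"
    using wp left_ideal_lprinc unfolding weakly_prime_def by blast
  moreover have "\<not> lprinc c \<subseteq> lprinc a"
  proof
    assume "lprinc c \<subseteq> lprinc a"
    moreover have "lprinc a \<subseteq> lprinc c"
      using inv factor invariant_is_factor_iff lprinc_subset_iff by blast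
    ultimately show False
      using not_two_sided two_sided_ideal_lprinc_invariant[OF inv] by auto
  qed
  moreover have "\<not> lprinc a' \<subseteq> lprinc a"
  proof
    assume "lprinc a' \<subseteq> lprinc a"
    then obtain w where "a' = w * a" using lprinc_self lprinc_iff by blast
    then have "1 * a' = (w * c) * a'" using a' by (simp add: mult.assoc)
    moreover have "a' \<noteq> 0" using a' not_two_sided two_sided_ideal_lprinc_0 by auto
    ultimately have "w * c = 1" by (metis mult_cancel_right)
    then show False using nonunit unit_iff_left_inverse by blast
  qed
  ultimately show False by blast
qed

lemma two_sided_ideal_left_quotient:
  assumes "left_ideal P"
  shows "two_sided_ideal {x. \<forall>r. \<forall>y\<in>B. x * r * y \<in> P}"
proof -
  have "x * r * (s * y) \<in> P" if "\<forall>r. \<forall>y\<in>B. x * r * y \<in> P" "y \<in> B" for x r s y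
  proof -
    have "x * (r * s) * y \<in> P" using that by blast
    then show ?thesis by (simp add: mult.assoc)
  qed
  with assms show ?thesis
    unfolding two_sided_ideal_def left_ideal_def right_ideal_def
    by (auto simp: left_diff_distrib mult.assoc)
qed

lemma weakly_prime_if_no_proper_two_sided_ideal_above:
  assumes P: "left_ideal P" and proper: "P \<noteq> UNIV"
    and no_ideal: "\<not> (\<exists>I. two_sided_ideal I \<and> I \<noteq> UNIV \<and> P \<subseteq> I)"
  shows "weakly_prime P"
  unfolding weakly_prime_def
proof (intro conjI proper allI impI)
  fix A B :: "'a set"
  assume "left_ideal A" "left_ideal B" and AB: "set_mult A B \<subseteq> P" and PB: "set_mult P B \<subseteq> P"
  define Q where "Q = {x. \<forall>r. \<forall>y\<in>B. x * r * y \<in> P}"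
  have "\<forall>r. \<forall>y\<in>B. r * y \<in> B" using \<open>left_ideal B\<close> unfolding left_ideal_def by blast
  then have "A \<subseteq> Q" "P \<subseteq> Q"
    using AB PB unfolding set_mult_subset_left_ideal_iff[OF P] Q_def
    by (auto simp: mult.assoc)
  then have "Q = UNIV"
    using no_ideal two_sided_ideal_left_quotient[OF P] unfolding Q_def by blast
  then have "\<forall>y\<in>B. 1 * 1 * y \<in> P" unfolding Q_def by blast
  then have "B \<subseteq> P" by auto
  then show "A \<subseteq> P \<or> B \<subseteq> P" ..
qed

theorem proposition3p17:
  fixes a :: "'a::ring_1_no_zero_divisors"
  assumes "PID TYPE('a)"
    and "\<not> two_sided_ideal (lprinc a)"
  shows "(weakly_prime (lprinc a) \<longleftrightarrow>
            \<not> (\<exists>c. invariant c \<and> \<not> unit c \<and> is_factor c a))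
       \<and> (weakly_prime (lprinc a) \<longleftrightarrow>
            \<not> (\<exists>I. two_sided_ideal I \<and> I \<noteq> UNIV \<and> lprinc a \<subseteq> I))"
proof -
  have "a \<noteq> 0" using assms(2) two_sided_ideal_lprinc_0 by blast
  have "lprinc a \<noteq> UNIV" using assms(2) two_sided_ideal_UNIV by metis
  have above_iff: "(\<exists>I. two_sided_ideal I \<and> I \<noteq> UNIV \<and> lprinc a \<subseteq> I) \<longleftrightarrow>
                   (\<exists>c. invariant c \<and> \<not> unit c \<and> is_factor c a)"
    using PID_proper_two_sided_ideal_above_iff[OF assms(1) \<open>a \<noteq> 0\<close>] .
  have "weakly_prime (lprinc a) \<longleftrightarrow>
        \<not> (\<exists>I. two_sided_ideal I \<and> I \<noteq> UNIV \<and> lprinc a \<subseteq> I)"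
    using above_iff not_weakly_prime_if_invariant_factor[OF _ _ _ assms(2)]
      weakly_prime_if_no_proper_two_sided_ideal_above[OF left_ideal_lprinc \<open>lprinc a \<noteq> UNIV\<close>]
    by blast
  with above_iff show ?thesis by blast
qed

end
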